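(* Let $k,n$ be integers with $n>2$ and $k\geq 4$, and let $c$ be an exact $k$-coloring of $\mathcal{B}_n$ with $c(\emptyset)=c([n])$ such that $\mathcal{B}_n$ contains no rainbow induced copy of $\mathcal{B}_2$. Then every rainbow chain in $\mathcal{B}_n$ has at most $4$ sets.
   Context: $\mathcal{B}_n$ is the Boolean lattice of subsets of $[n]$ under inclusion. An exact $k$-coloring is a surjective map $c:\mathcal{B}_n\to[k]$. A rainbow chain is a chain of sets whose colors are pairwise distinct. A rainbow induced copy of $\mathcal{B}_2$ is four sets $W_1\subsetneq W_2,W_3\subsetneq W_4$ with $W_2,W_3$ incomparable and pairwise distinct colors. *)

theory Defs
  imports Main
begin

definition boolean_lattice :: "nat \<Rightarrow> nat set set" where
  "boolean_lattice n = Pow {1..n}"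

definition exact_coloring :: "nat \<Rightarrow> nat \<Rightarrow> (nat set \<Rightarrow> nat) \<Rightarrow> bool" where
  "exact_coloring n k c \<longleftrightarrow> c ` boolean_lattice n = {1..k}"

definition is_chain :: "nat set set \<Rightarrow> bool" where
  "is_chain C \<longleftrightarrow> (\<forall>A\<in>C. \<forall>B\<in>C. A \<subseteq> B \<or> B \<subseteq> A)"

definition rainbow_chain :: "nat \<Rightarrow> (nat set \<Rightarrow> nat) \<Rightarrow> nat set set \<Rightarrow> bool" where
  "rainbow_chain n c C \<longleftrightarrow> C \<subseteq> boolean_lattice n \<and> is_chain C \<and> inj_on c C"

definition rainbow_induced_B2 :: "nat \<Rightarrow> (nat set \<Rightarrow> nat) \<Rightarrow> bool" where
  "rainbow_induced_B2 n c \<longleftrightarrow>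
     (\<exists>W1 W2 W3 W4. W1 \<in> boolean_lattice n \<and> W2 \<in> boolean_lattice n \<and>
        W3 \<in> boolean_lattice n \<and> W4 \<in> boolean_lattice n \<and>
        W1 \<subset> W2 \<and> W1 \<subset> W3 \<and> W2 \<subset> W4 \<and> W3 \<subset> W4 \<and>
        \<not> W2 \<subseteq> W3 \<and> \<not> W3 \<subseteq> W2 \<and>
        distinct [c W1, c W2, c W3, c W4])"

end

theory Submission
  imports Defs
begin

text \<open>
  Drop from a rainbow chain of five sets the (at most one) set carrying the colour of
  \<open>{}\<close> and \<open>[n]\<close>: what remains, framed by \<open>{}\<close> and \<open>[n]\<close>, is a chain
  \<open>T\<^sub>0 \<subset> \<dots> \<subset> T\<^sub>5\<close> whose inner sets have four distinct colours different from the common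
  colour of its ends. The set \<open>D = T\<^sub>1 \<union> (T\<^sub>4 - T\<^sub>3)\<close> is incomparable with \<open>T\<^sub>2\<close> and
  \<open>T\<^sub>3\<close>, and the three copies \<open>(T\<^sub>0, T\<^sub>2, D, T\<^sub>4)\<close>, \<open>(T\<^sub>1, T\<^sub>3, D, T\<^sub>4)\<close>,
  \<open>(T\<^sub>1, T\<^sub>2, D, T\<^sub>5)\<close> of \<open>B\<^sub>2\<close> cannot all fail to be rainbow: the first two force
  \<open>c D = c T\<^sub>4\<close>, which makes the third one rainbow.
\<close>

lemma finite_chain_sorted_list:
  assumes "finite C" and "is_chain C"
  shows "\<exists>xs. set xs = C \<and> sorted_wrt (\<subset>) xs"
  using assms
proof (induction C rule: finite_remove_induct)
  case empty
  then show ?case by simp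
next
  case (remove A)
  obtain M where M: "M \<in> A" and maximal: "\<forall>B\<in>A. M \<subseteq> B \<longrightarrow> M = B"
    using finite_has_maximal[OF remove.hyps(1,2)] by blast
  have below: "B \<subset> M" if "B \<in> A - {M}" for B
    using that M maximal \<open>is_chain A\<close> unfolding is_chain_def by blast
  have "is_chain (A - {M})"
    using \<open>is_chain A\<close> unfolding is_chain_def by blast
  then obtain xs where xs: "set xs = A - {M}" "sorted_wrt (\<subset>) xs"
    using remove.IH[OF M] by blast
  have "set (xs @ [M]) = A" using xs(1) M by auto
  moreover have "sorted_wrt (\<subset>) (xs @ [M])"
    using xs below by (simp add: sorted_wrt_append)
  ultimately show ?case by blast
qed

lemma card_le_Suc_card_avoiding_colour:
  assumes "finite C" and "inj_on c C"
  shows "card C \<le> Suc (card {S\<in>C. c S \<noteq> z})"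
proof -
  have "card C - 1 = card (c ` C) - card {z}"
    using card_image[OF assms(2)] by simp
  also have "\<dots> \<le> card (c ` C - {z})"
    by (rule diff_card_le_card_Diff) simp
  also have "c ` C - {z} = c ` {S\<in>C. c S \<noteq> z}"
    by auto
  also have "card \<dots> \<le> card {S\<in>C. c S \<noteq> z}"
    using assms(1) by (intro card_image_le) simp
  finally show ?thesis
    by linarith
qed

lemma union_Diff_strictly_between:
  assumes "A \<subset> B" and "B \<subset> C" and "C \<subset> E"
  shows "A \<subset> A \<union> (E - C)" and "A \<union> (E - C) \<subset> E"
    and "\<not> B \<subseteq> A \<union> (E - C)" and "\<not> A \<union> (E - C) \<subseteq> C"
  using assms by auto

lemma mem_if_not_distinct:
  assumes "\<not> distinct [a, b, x, d]" and "distinct [a, b, d]"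
  shows "x \<in> {a, b, d}"
  using assms by auto

lemma rainbow_induced_B2I:
  assumes "W4 \<subseteq> {1..n}"
    and "W1 \<subset> W2" and "W1 \<subset> W3" and "W2 \<subset> W4" and "W3 \<subset> W4"
    and "\<not> W2 \<subseteq> W3" and "\<not> W3 \<subseteq> W2"
    and "distinct [c W1, c W2, c W3, c W4]"
  shows "rainbow_induced_B2 n c"
proof -
  have "W1 \<in> boolean_lattice n" "W2 \<in> boolean_lattice n"
    and "W3 \<in> boolean_lattice n" "W4 \<in> boolean_lattice n"
    using assms(1-5) unfolding boolean_lattice_def by auto
  then show ?thesis
    unfolding rainbow_induced_B2_def using assms(2-8) by blast
qed

lemma rainbow_induced_B2_if_chain_ends_same_colour:
  assumes chain: "T0 \<subset> T1" "T1 \<subset> T2" "T2 \<subset> T3" "T3 \<subset> T4" "T4 \<subset> T5"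
    and "T5 \<subseteq> {1..n}"
    and "c T5 = c T0"
    and colours: "distinct [c T0, c T1, c T2, c T3, c T4]"
  shows "rainbow_induced_B2 n c"
proof (rule ccontr)
  assume no_B2: "\<not> rainbow_induced_B2 n c"
  define D where "D = T1 \<union> (T4 - T3)"
  note D = union_Diff_strictly_between[OF chain(2-4), folded D_def]
  have T4: "T4 \<subseteq> {1..n}" using chain(5) \<open>T5 \<subseteq> {1..n}\<close> by blast
  have T0_T2: "T0 \<subset> T2" using chain(1,2) by (rule psubset_trans)
  have T0_D: "T0 \<subset> D" using chain(1) D(1) by (rule psubset_trans)
  have T1_T3: "T1 \<subset> T3" using chain(2,3) by (rule psubset_trans)
  have T2_T4: "T2 \<subset> T4" using chain(3,4) by (rule psubset_trans)
  have T2_T5: "T2 \<subset> T5" using T2_T4 chain(5) by (rule psubset_trans)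
  have D_T5: "D \<subset> T5" using D(2) chain(5) by (rule psubset_trans)
  have T3_D: "\<not> T3 \<subseteq> D" and D_T2: "\<not> D \<subseteq> T2"
    using chain(3) D(3,4) by blast+
  have "\<not> distinct [c T0, c T2, c D, c T4]"
    using rainbow_induced_B2I[OF T4 T0_T2 T0_D T2_T4 D(2) D(3) D_T2] no_B2 by blast
  then have "c D \<in> {c T0, c T2, c T4}"
    by (rule mem_if_not_distinct) (use colours in simp)
  moreover have "\<not> distinct [c T1, c T3, c D, c T4]"
    using rainbow_induced_B2I[OF T4 T1_T3 D(1) chain(4) D(2) T3_D D(4)] no_B2 by blast
  then have "c D \<in> {c T1, c T3, c T4}"
    by (rule mem_if_not_distinct) (use colours in simp)
  ultimately have "c D = c T4"
    using colours by (metis distinct_length_2_or_more insertE singletonD)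
  moreover have "\<not> distinct [c T1, c T2, c D, c T5]"
    using rainbow_induced_B2I[OF \<open>T5 \<subseteq> {1..n}\<close> chain(2) D(1) T2_T5 D_T5 D(3) D_T2] no_B2 by blast
  ultimately have "\<not> distinct [c T1, c T2, c T4, c T0]"
    using \<open>c T5 = c T0\<close> by simp
  then show False
    using colours by (metis distinct_length_2_or_more)
qed

lemma rainbow_chain_framed_subchain:
  assumes "rainbow_chain n c C" and "card C > 4" and "c {} = c {1..n}"
  obtains Y1 Y2 Y3 Y4
  where "{} \<subset> Y1" "Y1 \<subset> Y2" "Y2 \<subset> Y3" "Y3 \<subset> Y4" "Y4 \<subset> {1..n}"
    and "distinct [c {}, c Y1, c Y2, c Y3, c Y4]"
proof -
  have C: "C \<subseteq> Pow {1..n}" "is_chain C" "inj_on c C" "finite C"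
    using assms(1) unfolding rainbow_chain_def boolean_lattice_def by (auto intro: finite_subset)
  define C' where "C' = {S\<in>C. c S \<noteq> c {}}"
  have "is_chain C'" using C(2) unfolding C'_def is_chain_def by blast
  then obtain xs where xs: "set xs = C'" "sorted_wrt (\<subset>) xs"
    using finite_chain_sorted_list[of C'] C(4) unfolding C'_def by auto
  have "length xs \<ge> 4"
    using card_le_Suc_card_avoiding_colour[OF C(4,3), of "c {}"] assms(2) card_length[of xs]
    unfolding xs(1) C'_def by linarith
  then obtain Y1 Y2 Y3 Y4 ys where Y: "xs = Y1 # Y2 # Y3 # Y4 # ys"
    by (auto simp: numeral_eq_Suc Suc_le_length_iff)
  have chain: "Y1 \<subset> Y2" "Y2 \<subset> Y3" "Y3 \<subset> Y4"
    and chain_trans: "Y1 \<subset> Y3" "Y1 \<subset> Y4" "Y2 \<subset> Y4"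
    using xs(2) unfolding Y by simp_all
  have in_C': "Y1 \<in> C'" "Y2 \<in> C'" "Y3 \<in> C'" "Y4 \<in> C'"
    using xs(1) unfolding Y by auto
  then have "{} \<subset> Y1" and "Y4 \<subset> {1..n}"
    using C(1) assms(3) unfolding C'_def by auto
  moreover have "distinct [c {}, c Y1, c Y2, c Y3, c Y4]"
    using in_C' chain chain_trans unfolding C'_def by (auto simp: inj_on_eq_iff[OF C(3)])
  ultimately show thesis
    using that chain by blast
qed

theorem lemma2p11:
  fixes n k :: nat and c :: "nat set \<Rightarrow> nat"
  assumes "n > 2" and "k \<ge> 4"
    and "exact_coloring n k c"
    and "c {} = c {1..n}"
    and "\<not> rainbow_induced_B2 n c"
  shows "\<forall>C. rainbow_chain n c C \<longrightarrow> card C \<le> 4"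
proof (intro allI impI, rule ccontr)
  fix C assume "rainbow_chain n c C" and "\<not> card C \<le> 4"
  then obtain Y1 Y2 Y3 Y4
    where "{} \<subset> Y1" "Y1 \<subset> Y2" "Y2 \<subset> Y3" "Y3 \<subset> Y4" "Y4 \<subset> {1..n}"
      and "distinct [c {}, c Y1, c Y2, c Y3, c Y4]"
    using rainbow_chain_framed_subchain assms(4) by (metis not_le)
  then have "rainbow_induced_B2 n c"
    using rainbow_induced_B2_if_chain_ends_same_colour assms(4) by (metis order.refl)
  with assms(5) show False ..
qed

end
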